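(* Let $U\subset\mathbb R^n$ be open, $X$ a $C^1$ vector field on $U$, and $V:U\to\mathbb R$ a $C^2$ function satisfying A1, A2, and either A3 or A3$'$ (for A3$'$ assume $X,V$ are $C^\infty$). Then $V^{-1}(0)$ is uniformly asymptotically stable for the system $\dot x = X(x)-\nabla V(x)$.
   Context: (A1) $V\ge0$ on $U$, $V^{-1}(0)\ne\emptyset$, $\nabla V\cdot X=0$ on $U$. (A2) $c>0$ is such that $V^{-1}([0,c])$ is a compact subset of $U$. (A3) The set of critical points of $V$ in $V^{-1}([0,c])$ equals $V^{-1}(0)$. (A3$'$) With $X^0g=g$, $X^kg=X\cdot\nabla(X^{k-1}g)$ and $S=\{x\in U: X^k\partial V/\partial x^i(x)=0\ \forall k\ge0,\,1\le i\le n\}$, one has $S\cap V^{-1}([0,c])\subset V^{-1}(0)$. For nonempty compact $\Lambda\subset\mathbb R^n$, $\operatorname{dist}(x,\Lambda)=\inf_{a\in\Lambda}|x-a|$ and $S(\Lambda,r)=\{x:\operatorname{dist}(x,\Lambda)<r\}$. Let $x(t;x_0)$ be the solution with $x(0)=x_0$. $\Lambda$ is uniformly stable if for each $\epsilon>0$ there is $\delta>0$ with $x_0\in S(\Lambda,\delta),\ t\ge0\Rightarrow x(t;x_0)\in S(\Lambda,\epsilon)$. $\Lambda$ is uniformly asymptotically stable if it is positively invariant and uniformly stable and there is $\delta_0>0$ and for each $\epsilon>0$ a $T(\epsilon)>0$ with $x_0\in S(\Lambda,\delta_0),\ t\ge T(\epsilon)\Rightarrow x(t;x_0)\in S(\Lambda,\epsilon)$.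 *)

theory Defs
  imports "HOL-Analysis.Analysis"
begin

text \<open>Partial derivative of f in the direction of the basis vector i (well defined when f is
  differentiable at x).\<close>
definition pderiv_at :: "('a::euclidean_space \<Rightarrow> 'b::real_normed_vector) \<Rightarrow> 'a \<Rightarrow> 'a \<Rightarrow> 'b" where
  "pderiv_at f i x = frechet_derivative f (at x) i"

fun Ck_on :: "nat \<Rightarrow> 'a::euclidean_space set \<Rightarrow> ('a \<Rightarrow> 'b::real_normed_vector) \<Rightarrow> bool" where
  "Ck_on 0 U f = continuous_on U f"
| "Ck_on (Suc k) U f =
     ((\<forall>x\<in>U. f differentiable (at x)) \<and> (\<forall>i\<in>Basis. Ck_on k U (\<lambda>x. pderiv_at f i x)))"

definition smooth_on :: "'a::euclidean_space set \<Rightarrow> ('a \<Rightarrow> 'b::real_normed_vector) \<Rightarrow> bool" where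
  "smooth_on U f = (\<forall>k. Ck_on k U f)"

definition grad :: "('a::euclidean_space \<Rightarrow> real) \<Rightarrow> 'a \<Rightarrow> 'a" where
  "grad V x = (\<Sum>i\<in>Basis. pderiv_at V i x *\<^sub>R i)"

fun lie_iter :: "('a::euclidean_space \<Rightarrow> 'a) \<Rightarrow> nat \<Rightarrow> ('a \<Rightarrow> real) \<Rightarrow> 'a \<Rightarrow> real" where
  "lie_iter X 0 g = g"
| "lie_iter X (Suc k) g = (\<lambda>x. X x \<bullet> grad (lie_iter X k g) x)"

definition nbhd :: "'a::euclidean_space set \<Rightarrow> real \<Rightarrow> 'a set" where
  "nbhd L r = {x. infdist x L < r}"

definition is_solution :: "'a::euclidean_space set \<Rightarrow> ('a \<Rightarrow> 'a) \<Rightarrow> 'a \<Rightarrow> (real \<Rightarrow> 'a) \<Rightarrow> bool" where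
  "is_solution U F x0 x \<longleftrightarrow> x 0 = x0 \<and>
     (\<forall>t\<ge>0. x t \<in> U \<and> (x has_vector_derivative F (x t)) (at t within {0..}))"

definition pos_invariant :: "'a::euclidean_space set \<Rightarrow> ('a \<Rightarrow> 'a) \<Rightarrow> 'a set \<Rightarrow> bool" where
  "pos_invariant U F L \<longleftrightarrow>
     (\<forall>x0\<in>L. (\<exists>x. is_solution U F x0 x) \<and> (\<forall>x. is_solution U F x0 x \<longrightarrow> (\<forall>t\<ge>0. x t \<in> L)))"

definition unif_stable :: "'a::euclidean_space set \<Rightarrow> ('a \<Rightarrow> 'a) \<Rightarrow> 'a set \<Rightarrow> bool" where
  "unif_stable U F L \<longleftrightarrow>
     (\<forall>\<epsilon>>0. \<exists>\<delta>>0. \<forall>x0\<in>nbhd L \<delta>. (\<exists>x. is_solution U F x0 x) \<and>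
        (\<forall>x. is_solution U F x0 x \<longrightarrow> (\<forall>t\<ge>0. x t \<in> nbhd L \<epsilon>)))"

definition unif_asym_stable :: "'a::euclidean_space set \<Rightarrow> ('a \<Rightarrow> 'a) \<Rightarrow> 'a set \<Rightarrow> bool" where
  "unif_asym_stable U F L \<longleftrightarrow> pos_invariant U F L \<and> unif_stable U F L \<and>
     (\<exists>\<delta>0>0. (\<forall>x0\<in>nbhd L \<delta>0. \<exists>x. is_solution U F x0 x) \<and>
        (\<forall>\<epsilon>>0. \<exists>T>0. \<forall>x0\<in>nbhd L \<delta>0. \<forall>x. is_solution U F x0 x \<longrightarrow>
            (\<forall>t\<ge>T. x t \<in> nbhd L \<epsilon>)))"

end

theory Submission
  imports Defs
begin

text \<open>Since \<open>\<nabla>V \<bottom> X\<close>, \<open>V\<close> decreases along solutions of \<open>x' = X - \<nabla>V\<close> at rate \<open>|\<nabla>V|\<^sup>2\<close>.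
  Hence solutions starting in \<open>{V < c}\<close> stay in the compact set \<open>K = V\<^sup>-\<^sup>1[0,c]\<close>, exist for all
  time, and over a short window depend Lipschitz continuously on the initial point. A3, or A3'
  through the iterated Lie derivatives of \<open>\<nabla>V\<close>, forbids \<open>V\<close> to stay constant on a window
  outside \<open>V\<^sup>-\<^sup>1(0)\<close>; by compactness \<open>V\<close> then drops by a uniform amount per window on
  \<open>{\<eta> \<le> V \<le> c/2}\<close>, which gives uniform attraction. Stability holds because \<open>V\<close> is small
  exactly near \<open>V\<^sup>-\<^sup>1(0)\<close>.\<close>

lemma has_derivative_pderiv_at_sum:
  assumes "f differentiable (at x)"
  shows "(f has_derivative (\<lambda>h. \<Sum>i\<in>Basis. (h \<bullet> i) *\<^sub>R pderiv_at f i x)) (at x)"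
proof -
  have D: "(f has_derivative frechet_derivative f (at x)) (at x)"
    using assms frechet_derivative_works by blast
  have lin: "linear (frechet_derivative f (at x))"
    using D has_derivative_linear by blast
  have "frechet_derivative f (at x) h = (\<Sum>i\<in>Basis. (h \<bullet> i) *\<^sub>R pderiv_at f i x)" for h
  proof -
    have "frechet_derivative f (at x) h = frechet_derivative f (at x) (\<Sum>i\<in>Basis. (h \<bullet> i) *\<^sub>R i)"
      by (simp add: euclidean_representation)
    also have "\<dots> = (\<Sum>i\<in>Basis. (h \<bullet> i) *\<^sub>R frechet_derivative f (at x) i)"
      by (simp add: linear_sum[OF lin] linear_cmul[OF lin])
    finally show ?thesis by (simp add: pderiv_at_def)
  qed
  then have "frechet_derivative f (at x) = (\<lambda>h. \<Sum>i\<in>Basis. (h \<bullet> i) *\<^sub>R pderiv_at f i x)"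
    by blast
  with D show ?thesis by simp
qed

lemma has_derivative_grad:
  fixes f :: "'a::euclidean_space \<Rightarrow> real"
  assumes "f differentiable (at x)"
  shows "(f has_derivative (\<lambda>h. h \<bullet> grad f x)) (at x)"
proof -
  have "(\<lambda>h. \<Sum>i\<in>Basis. (h \<bullet> i) *\<^sub>R pderiv_at f i x) = (\<lambda>h. h \<bullet> grad f x)"
    by (auto simp: grad_def inner_sum_right mult.commute)
  with has_derivative_pderiv_at_sum[OF assms] show ?thesis by simp
qed

lemma grad_inner_Basis:
  assumes "i \<in> Basis"
  shows "grad f x \<bullet> i = pderiv_at f i x"
  using assms by (simp add: grad_def inner_sum_left inner_Basis if_distrib sum.delta cong: if_cong)

lemma has_vector_derivative_grad_comp:
  fixes h :: "'a::euclidean_space \<Rightarrow> real"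
  assumes "(y has_vector_derivative v) (at t within S)" "h differentiable (at (y t))"
  shows "((\<lambda>s. h (y s)) has_vector_derivative (v \<bullet> grad h (y t))) (at t within S)"
proof -
  have dy: "(y has_derivative (\<lambda>r. r *\<^sub>R v)) (at t within S)"
    using assms(1) by (simp add: has_vector_derivative_def)
  have dh: "(h has_derivative (\<lambda>w. w \<bullet> grad h (y t))) (at (y t) within y ` S)"
    using has_derivative_grad[OF assms(2)] has_derivative_at_withinI by blast
  show ?thesis
    using diff_chain_within[OF dy dh] by (simp add: o_def has_vector_derivative_def)
qed

lemma pderiv_at_eq: "(f has_derivative D) (at x) \<Longrightarrow> pderiv_at f i x = D i"
  using frechet_derivative_at pderiv_at_def by metis

lemma pderiv_at_transform_within_open:
  assumes "open U" "x \<in> U" "\<And>y. y \<in> U \<Longrightarrow> f y = g y" "f differentiable (at x)"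
  shows "pderiv_at g i x = pderiv_at f i x" "g differentiable (at x)"
proof -
  have Df: "(f has_derivative frechet_derivative f (at x)) (at x)"
    using assms frechet_derivative_works by blast
  have Dg: "(g has_derivative frechet_derivative f (at x)) (at x)"
    by (rule has_derivative_transform_within_open[OF Df assms(1,2)]) (use assms in auto)
  show "pderiv_at g i x = pderiv_at f i x" using pderiv_at_eq[OF Df] pderiv_at_eq[OF Dg] by simp
  show "g differentiable (at x)" using Dg differentiable_def by blast
qed

lemma Ck_on_transform_within_open:
  fixes f g :: "'a::euclidean_space \<Rightarrow> 'b::real_normed_vector"
  assumes "open U" "Ck_on k U f" "\<And>x. x \<in> U \<Longrightarrow> f x = g x"
  shows "Ck_on k U g"
  using assms(2,3)
proof (induction k arbitrary: f g)
  case 0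
  then show ?case using continuous_on_cong by force
next
  case (Suc k)
  have df: "\<forall>x\<in>U. f differentiable (at x)" using Suc.prems by simp
  have "Ck_on k U (\<lambda>x. pderiv_at g i x)" if "i \<in> Basis" for i
  proof (rule Suc.IH)
    show "Ck_on k U (\<lambda>x. pderiv_at f i x)" using Suc.prems that by simp
    show "pderiv_at f i x = pderiv_at g i x" if "x \<in> U" for x
      using pderiv_at_transform_within_open(1)[OF assms(1) that Suc.prems(2)] df that by simp
  qed
  moreover have "g differentiable (at x)" if "x \<in> U" for x
    using pderiv_at_transform_within_open(2)[of U x f g] assms(1) that Suc.prems df by blast
  ultimately show ?case by simp
qed

lemma Ck_on_SucD:
  assumes "open U" "Ck_on (Suc k) U f"
  shows "Ck_on k U f"
  using assms(2)
proof (induction k arbitrary: f)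
  case 0
  then show ?case
    by (auto intro!: continuous_at_imp_continuous_on differentiable_imp_continuous_within)
next
  case (Suc k)
  then show ?case by simp
qed

lemma Ck_on_continuous_on: "open U \<Longrightarrow> Ck_on k U f \<Longrightarrow> continuous_on U f"
  by (induction k) (auto dest: Ck_on_SucD)

lemma Ck_on_const:
  fixes U :: "'a::euclidean_space set" and c :: "'b::real_normed_vector"
  shows "Ck_on k U (\<lambda>x. c)"
proof (induction k arbitrary: c)
  case (Suc k)
  have "pderiv_at (\<lambda>x::'a. c) i = (\<lambda>x. 0)" for i
    by (rule ext) (metis pderiv_at_eq has_derivative_const)
  then show ?case using Suc.IH by simp
qed simp

lemma Ck_on_add:
  assumes "open U" "Ck_on k U f" "Ck_on k U g"
  shows "Ck_on k U (\<lambda>x. f x + g x)"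
  using assms(2,3)
proof (induction k arbitrary: f g)
  case 0
  then show ?case by (simp add: continuous_on_add)
next
  case (Suc k)
  have Df: "(f has_derivative frechet_derivative f (at x)) (at x)"
    and Dg: "(g has_derivative frechet_derivative g (at x)) (at x)" if "x \<in> U" for x
    using Suc.prems that by (simp_all flip: frechet_derivative_works)
  note D = has_derivative_add[OF Df Dg]
  have "Ck_on k U (\<lambda>x. pderiv_at (\<lambda>x. f x + g x) i x)" if "i \<in> Basis" for i
  proof (rule Ck_on_transform_within_open[OF assms(1)])
    show "Ck_on k U (\<lambda>x. pderiv_at f i x + pderiv_at g i x)"
      using Suc.IH Suc.prems that by simp
    show "pderiv_at f i x + pderiv_at g i x = pderiv_at (\<lambda>x. f x + g x) i x" if "x \<in> U" for x
      using pderiv_at_eq[OF D[OF that that]] by (simp add: pderiv_at_def)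
  qed
  moreover have "\<forall>x\<in>U. (\<lambda>x. f x + g x) differentiable (at x)"
    using D differentiable_def by blast
  ultimately show ?case by simp
qed

lemma Ck_on_bilinear:
  fixes prod :: "'b::real_normed_vector \<Rightarrow> 'c::real_normed_vector \<Rightarrow> 'd::real_normed_vector"
    and f :: "'a::euclidean_space \<Rightarrow> 'b" and g :: "'a \<Rightarrow> 'c"
  assumes "open U" "bounded_bilinear prod" "Ck_on k U f" "Ck_on k U g"
  shows "Ck_on k U (\<lambda>x. prod (f x) (g x))"
  using assms(3,4)
proof (induction k arbitrary: f g)
  case 0
  then show ?case using bounded_bilinear.continuous_on[OF assms(2)] by simp
next
  case (Suc k)
  have Df: "(f has_derivative frechet_derivative f (at x)) (at x)"
    and Dg: "(g has_derivative frechet_derivative g (at x)) (at x)" if "x \<in> U" for x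
    using Suc.prems that by (simp_all flip: frechet_derivative_works)
  note D = bounded_bilinear.FDERIV[OF assms(2) Df Dg]
  have "Ck_on k U (\<lambda>x. pderiv_at (\<lambda>x. prod (f x) (g x)) i x)" if "i \<in> Basis" for i
  proof (rule Ck_on_transform_within_open[OF assms(1)])
    have "Ck_on k U f" "Ck_on k U g" using Ck_on_SucD[OF assms(1)] Suc.prems by auto
    moreover have "Ck_on k U (\<lambda>x. pderiv_at f i x)" "Ck_on k U (\<lambda>x. pderiv_at g i x)"
      using Suc.prems that by auto
    ultimately show "Ck_on k U (\<lambda>x. prod (f x) (pderiv_at g i x) + prod (pderiv_at f i x) (g x))"
      using Suc.IH Ck_on_add[OF assms(1)] by blast
    show "prod (f x) (pderiv_at g i x) + prod (pderiv_at f i x) (g x)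
        = pderiv_at (\<lambda>x. prod (f x) (g x)) i x" if "x \<in> U" for x
      using pderiv_at_eq[OF D[OF that that]] by (simp add: pderiv_at_def)
  qed
  moreover have "\<forall>x\<in>U. (\<lambda>x. prod (f x) (g x)) differentiable (at x)"
    using D differentiable_def by blast
  ultimately show ?case by simp
qed

lemma Ck_on_scaleR:
  fixes f :: "'a::euclidean_space \<Rightarrow> real" and g :: "'a \<Rightarrow> 'b::real_normed_vector"
  shows "open U \<Longrightarrow> Ck_on k U f \<Longrightarrow> Ck_on k U g \<Longrightarrow> Ck_on k U (\<lambda>x. f x *\<^sub>R g x)"
  by (rule Ck_on_bilinear[OF _ bounded_bilinear_scaleR])

lemma Ck_on_sum:
  assumes "open U" "finite S" "\<And>j. j \<in> S \<Longrightarrow> Ck_on k U (f j)"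
  shows "Ck_on k U (\<lambda>x. \<Sum>j\<in>S. f j x)"
  using assms(2,3)
  by (induction S rule: finite_induct) (auto intro: Ck_on_add[OF assms(1)] Ck_on_const)

lemma Ck_on_grad:
  assumes "open U" "Ck_on (Suc k) U V"
  shows "Ck_on k U (grad V)"
proof -
  have "Ck_on k U (\<lambda>x. \<Sum>i\<in>Basis. pderiv_at V i x *\<^sub>R i)"
    using assms by (intro Ck_on_sum Ck_on_scaleR Ck_on_const) auto
  then show ?thesis by (simp add: grad_def[abs_def])
qed

lemma lie_iter_Suc_pderiv_at:
  "lie_iter X (Suc k) g = (\<lambda>x. \<Sum>i\<in>Basis. (X x \<bullet> i) * pderiv_at (lie_iter X k g) i x)"
  by (rule ext) (simp add: grad_def inner_sum_right mult.commute)

lemma smooth_on_lie_iter: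
  assumes "open U" "smooth_on U X" "smooth_on U g"
  shows "smooth_on U (lie_iter X k g)"
proof (induction k)
  case 0
  then show ?case using assms by simp
next
  case (Suc k)
  have "Ck_on m U (\<lambda>x. \<Sum>i\<in>Basis. (X x \<bullet> i) * pderiv_at (lie_iter X k g) i x)" for m
  proof (intro Ck_on_sum[OF assms(1) finite_Basis]
      Ck_on_bilinear[OF assms(1) bounded_bilinear_mult])
    fix i :: 'a assume "i \<in> Basis"
    show "Ck_on m U (\<lambda>x. X x \<bullet> i)"
      using Ck_on_bilinear[OF assms(1) bounded_bilinear_inner, of m X "\<lambda>x. i"]
        Ck_on_const[of m U i] assms(2)
      by (simp add: smooth_on_def)
    show "Ck_on m U (\<lambda>x. pderiv_at (lie_iter X k g) i x)"
      using Suc.IH \<open>i \<in> Basis\<close> Ck_on.simps(2)[of m U "lie_iter X k g"]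
      by (simp add: smooth_on_def)
  qed
  then show ?case unfolding smooth_on_def lie_iter_Suc_pderiv_at by blast
qed

lemma compact_infdist_le:
  fixes K :: "'a::euclidean_space set"
  assumes "compact K" "K \<noteq> {}"
  shows "compact {y. infdist y K \<le> r}"
proof -
  have cl: "closed {y. infdist y K \<le> r}"
    by (intro closed_Collect_le continuous_intros continuous_on_id)
  obtain B where B: "\<And>a. a \<in> K \<Longrightarrow> norm a \<le> B"
    using compact_imp_bounded[OF assms(1)] by (auto simp: bounded_iff)
  have "norm y \<le> B + r" if "infdist y K \<le> r" for y
  proof -
    obtain a where a: "a \<in> K" "infdist y K = dist y a"
      using infdist_attains_inf[OF compact_imp_closed[OF assms(1)] assms(2)] by blast
    have "norm y \<le> norm a + dist y a" by (metis dist_norm norm_triangle_sub add.commute)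
    then show ?thesis using B[OF a(1)] a that by linarith
  qed
  then have "bounded {y. infdist y K \<le> r}" by (auto simp: bounded_iff)
  then show ?thesis using cl compact_eq_bounded_closed by blast
qed

lemma compact_infdist_le_subset_open:
  fixes K :: "'a::euclidean_space set"
  assumes "compact K" "K \<noteq> {}" "open U" "K \<subseteq> U"
  obtains r where "r > 0" "compact {y. infdist y K \<le> r}" "{y. infdist y K \<le> r} \<subseteq> U"
proof -
  obtain e where e: "e > 0" "(\<Union>a\<in>K. ball a e) \<subseteq> U"
    using compact_subset_open_imp_ball_epsilon_subset[OF assms(1,3,4)] by blast
  have "{y. infdist y K \<le> e / 2} \<subseteq> U"
  proof
    fix y assume "y \<in> {y. infdist y K \<le> e / 2}"
    then have "infdist y K \<le> e / 2" by simp
    obtain a where a: "a \<in> K" "infdist y K = dist y a"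
      using infdist_attains_inf[OF compact_imp_closed[OF assms(1)] assms(2)] by blast
    then have "y \<in> ball a e" using \<open>infdist y K \<le> e / 2\<close> e(1) by (simp add: dist_commute)
    then show "y \<in> U" using e(2) a(1) by blast
  qed
  then show ?thesis
    using that[of "e / 2"] e(1) compact_infdist_le[OF assms(1,2), of "e / 2"] by linarith
qed

lemma onorm_sum_Basis_le:
  fixes v :: "'a::euclidean_space \<Rightarrow> 'b::real_normed_vector"
  shows "onorm (\<lambda>h. \<Sum>i\<in>Basis. (h \<bullet> i) *\<^sub>R v i) \<le> (\<Sum>i\<in>Basis. norm (v i))"
proof (rule onorm_bound)
  fix h :: 'a
  have "norm (\<Sum>i\<in>Basis. (h \<bullet> i) *\<^sub>R v i) \<le> (\<Sum>i\<in>Basis. norm ((h \<bullet> i) *\<^sub>R v i))"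
    by (rule norm_sum)
  also have "\<dots> \<le> (\<Sum>i\<in>Basis. norm h * norm (v i))"
    by (intro sum_mono) (auto intro: mult_right_mono Basis_le_norm)
  finally show "norm (\<Sum>i\<in>Basis. (h \<bullet> i) *\<^sub>R v i) \<le> (\<Sum>i\<in>Basis. norm (v i)) * norm h"
    by (simp add: sum_distrib_left mult.commute)
qed (simp add: sum_nonneg)

lemma continuous_on_compact_norm_boundE:
  assumes "compact S" "continuous_on S g"
  obtains M where "M \<ge> 0" "\<And>x. x \<in> S \<Longrightarrow> norm (g x) \<le> M"
proof -
  have "bounded (g ` S)" using compact_continuous_image[OF assms(2,1)] compact_imp_bounded by blast
  then obtain M where "\<forall>y\<in>g ` S. norm y \<le> M" by (auto simp: bounded_iff)
  then show ?thesis using that[of "max M 0"] by fastforce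
qed

lemma Ck_on_1_mean_value_bound:
  fixes f :: "'a::euclidean_space \<Rightarrow> 'b::real_normed_vector"
  assumes "Ck_on 1 U f" "closed_segment a b \<subseteq> S" "S \<subseteq> U"
    and "\<And>y. y \<in> S \<Longrightarrow> (\<Sum>i\<in>Basis. norm (pderiv_at f i y)) \<le> M"
  shows "norm (f b - f a) \<le> M * norm (b - a)"
proof (rule differentiable_bound[OF convex_closed_segment])
  fix z assume z: "z \<in> closed_segment a b"
  then have "f differentiable (at z)" using assms(1-3) by auto
  then show "(f has_derivative (\<lambda>h. \<Sum>i\<in>Basis. (h \<bullet> i) *\<^sub>R pderiv_at f i z))
      (at z within closed_segment a b)"
    using has_derivative_pderiv_at_sum has_derivative_at_withinI by blast
  show "onorm (\<lambda>h. \<Sum>i\<in>Basis. (h \<bullet> i) *\<^sub>R pderiv_at f i z) \<le> M"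
    using onorm_sum_Basis_le[of "\<lambda>i. pderiv_at f i z"] assms(2,4) z by force
qed auto

text \<open>Near the diagonal the mean value inequality applies on segments inside a compact
  thickening of \<open>K\<close>; far from it, boundedness of \<open>f\<close> suffices.\<close>

lemma Ck_on_1_lipschitz_on_compact:
  fixes f :: "'a::euclidean_space \<Rightarrow> 'b::real_normed_vector"
  assumes "open U" "Ck_on 1 U f" "compact K" "K \<subseteq> U"
  obtains L where "L-lipschitz_on K f"
proof (cases "K = {}")
  case True
  then show ?thesis using that[of 0] by (simp add: lipschitz_on_def)
next
  case False
  obtain r where r: "r > 0" "compact {y. infdist y K \<le> r}" "{y. infdist y K \<le> r} \<subseteq> U"
    using compact_infdist_le_subset_open[OF assms(3) False assms(1,4)] by blast
  define K' where "K' = {y. infdist y K \<le> r}"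
  have "continuous_on K' (\<lambda>y. \<Sum>i\<in>Basis. norm (pderiv_at f i y))"
    using r(3) assms(2) by (auto simp: K'_def intro!: continuous_intros intro: continuous_on_subset)
  then obtain M where M: "M \<ge> 0" "\<And>y. y \<in> K' \<Longrightarrow> norm (\<Sum>i\<in>Basis. norm (pderiv_at f i y)) \<le> M"
    using continuous_on_compact_norm_boundE[OF r(2)[folded K'_def]] by blast
  obtain M0 where M0: "M0 \<ge> 0" "\<And>a. a \<in> K \<Longrightarrow> norm (f a) \<le> M0"
    using continuous_on_compact_norm_boundE[OF assms(3)]
      continuous_on_subset[OF Ck_on_continuous_on[OF assms(1,2)] assms(4)] by blast
  define L where "L = max M (2 * M0 / r)"
  have "norm (f b - f a) \<le> L * norm (b - a)" if ab: "a \<in> K" "b \<in> K" for a b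
  proof (cases "norm (b - a) \<le> r")
    case True
    have "closed_segment a b \<subseteq> K'"
    proof
      fix z assume z: "z \<in> closed_segment a b"
      have "infdist z K \<le> dist z a" using infdist_le[OF ab(1)] by simp
      also have "\<dots> \<le> dist a b" using dist_in_closed_segment[OF z] by simp
      finally show "z \<in> K'" using True by (simp add: K'_def dist_norm norm_minus_commute)
    qed
    then have "norm (f b - f a) \<le> M * norm (b - a)"
      using Ck_on_1_mean_value_bound[OF assms(2) _ r(3)[folded K'_def]] M(2) by force
    also have "\<dots> \<le> L * norm (b - a)" by (intro mult_right_mono) (auto simp: L_def)
    finally show ?thesis .
  next
    case False
    have "norm (f b - f a) \<le> 2 * M0"
      using norm_triangle_ineq4[of "f b" "f a"] M0(2)[OF ab(1)] M0(2)[OF ab(2)] by simp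
    also have "\<dots> = (2 * M0 / r) * r" using r by simp
    also have "\<dots> \<le> L * norm (b - a)"
      using False M(1) M0 r by (intro mult_mono) (auto simp: L_def)
    finally show ?thesis .
  qed
  then have "L-lipschitz_on K f"
    using M(1) by (auto intro!: lipschitz_onI simp: dist_norm L_def norm_minus_commute)
  then show ?thesis by (rule that)
qed

text \<open>McShane's extension \<open>g x = inf\<^sub>y\<^sub>\<in>\<^sub>K (f y + L dist x y)\<close>.\<close>

lemma lipschitz_extension_real:
  fixes f :: "'a::metric_space \<Rightarrow> real"
  assumes "K \<noteq> {}" "L-lipschitz_on K f" "\<And>a. a \<in> K \<Longrightarrow> B \<le> f a"
  obtains g where "\<And>a. a \<in> K \<Longrightarrow> g a = f a" "L-lipschitz_on UNIV g"
proof -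
  have L: "L \<ge> 0" using lipschitz_on_nonneg[OF assms(2)] .
  define g where "g x = Inf ((\<lambda>y. f y + L * dist x y) ` K)" for x
  have "bdd_below ((\<lambda>y. f y + L * dist x y) ` K)" for x
    using assms(3) L by (intro bdd_belowI2[where m = B]) (simp add: add_increasing2)
  then have low: "g x \<le> f y + L * dist x y" if "y \<in> K" for x y
    unfolding g_def using that by (intro cInf_lower) auto
  have high: "z \<le> g x" if "\<And>y. y \<in> K \<Longrightarrow> z \<le> f y + L * dist x y" for x z
    unfolding g_def using that assms(1) by (intro cInf_greatest) auto
  have "g a = f a" if "a \<in> K" for a
  proof (rule antisym)
    show "g a \<le> f a" using low[OF that, of a] by simp
    show "f a \<le> g a"
    proof (rule high)
      fix y assume "y \<in> K"
      then show "f a \<le> f y + L * dist a y"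
        using lipschitz_onD[OF assms(2) that \<open>y \<in> K\<close>] by (simp add: dist_real_def abs_le_iff)
    qed
  qed
  moreover have "L-lipschitz_on UNIV g"
  proof (rule lipschitz_onI)
    have g_le: "g x \<le> g x' + L * dist x x'" for x x'
    proof -
      have "g x - L * dist x x' \<le> f y + L * dist x' y" if "y \<in> K" for y
      proof -
        have "g x \<le> f y + L * dist x y" using low[OF that] .
        also have "\<dots> \<le> f y + L * (dist x x' + dist x' y)"
          using dist_triangle[of x y x'] L by (intro add_left_mono mult_left_mono) auto
        finally show ?thesis by (simp add: algebra_simps)
      qed
      then show ?thesis using high[where x = x' and z = "g x - L * dist x x'"] by simp
    qed
    show "dist (g x) (g y) \<le> L * dist x y" for x y
      using g_le[of x y] g_le[of y x] by (simp add: dist_real_def dist_commute abs_le_iff)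
  qed (rule L)
  ultimately show ?thesis using that by blast
qed

lemma lipschitz_extension_real_bounded:
  fixes f :: "'a::metric_space \<Rightarrow> real"
  assumes "K \<noteq> {}" "L-lipschitz_on K f" "\<And>a. a \<in> K \<Longrightarrow> \<bar>f a\<bar> \<le> B"
  obtains g where "\<And>a. a \<in> K \<Longrightarrow> g a = f a" "L-lipschitz_on UNIV g" "\<And>x. \<bar>g x\<bar> \<le> B"
proof -
  have "- B \<le> f a" if "a \<in> K" for a using assms(3)[OF that] by (simp add: abs_le_iff)
  then obtain h where h: "\<And>a. a \<in> K \<Longrightarrow> h a = f a" "L-lipschitz_on UNIV h"
    using lipschitz_extension_real[OF assms(1,2)] by blast
  define g where "g x = max (- B) (min B (h x))" for x
  have "g a = f a" if "a \<in> K" for a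
    using h(1)[OF that] assms(3)[OF that] by (simp add: g_def abs_le_iff)
  moreover have "L-lipschitz_on UNIV g"
  proof (rule lipschitz_onI)
    fix x y :: 'a
    show "dist (g x) (g y) \<le> L * dist x y"
      using lipschitz_onD[OF h(2), of x y] unfolding g_def dist_real_def
      by (simp add: max_def min_def abs_le_iff)
  qed (rule lipschitz_on_nonneg[OF h(2)])
  moreover have "\<bar>g x\<bar> \<le> B" for x
    using assms(1,3) unfolding g_def by (smt (verit) all_not_in_conv)
  ultimately show ?thesis using that by blast
qed

lemma lipschitz_on_inner_Basis:
  fixes F :: "'a::metric_space \<Rightarrow> 'b::euclidean_space"
  assumes "L-lipschitz_on K F" "i \<in> Basis"
  shows "L-lipschitz_on K (\<lambda>a. F a \<bullet> i)"
proof (rule lipschitz_onI)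
  fix a b assume ab: "a \<in> K" "b \<in> K"
  have "\<bar>(F a - F b) \<bullet> i\<bar> \<le> norm (F a - F b)" by (rule Basis_le_norm[OF assms(2)])
  also have "\<dots> \<le> L * dist a b" using lipschitz_onD[OF assms(1) ab] by (simp add: dist_norm)
  finally show "dist (F a \<bullet> i) (F b \<bullet> i) \<le> L * dist a b"
    by (simp add: dist_real_def inner_diff_left)
qed (rule lipschitz_on_nonneg[OF assms(1)])

lemma lipschitz_on_sum_Basis:
  fixes g :: "'b::euclidean_space \<Rightarrow> 'a::metric_space \<Rightarrow> real"
  assumes "\<And>i. i \<in> Basis \<Longrightarrow> L-lipschitz_on S (g i)" "L \<ge> 0"
  shows "(real DIM('b) * L)-lipschitz_on S (\<lambda>x. \<Sum>i\<in>Basis. g i x *\<^sub>R i)"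
proof (rule lipschitz_onI)
  fix x y assume "x \<in> S" "y \<in> S"
  have "dist (\<Sum>i\<in>Basis. g i x *\<^sub>R i) (\<Sum>i\<in>Basis. g i y *\<^sub>R i)
      = norm (\<Sum>i\<in>Basis. (g i x - g i y) *\<^sub>R i)"
    by (simp add: dist_norm sum_subtractf scaleR_diff_left)
  also have "\<dots> \<le> (\<Sum>i\<in>(Basis::'b set). norm ((g i x - g i y) *\<^sub>R i))" by (rule norm_sum)
  also have "\<dots> \<le> (\<Sum>i\<in>(Basis::'b set). L * dist x y)"
    using lipschitz_onD[OF assms(1) \<open>x \<in> S\<close> \<open>y \<in> S\<close>] by (intro sum_mono) (simp add: dist_real_def)
  finally show "dist (\<Sum>i\<in>Basis. g i x *\<^sub>R i) (\<Sum>i\<in>Basis. g i y *\<^sub>R i) \<le> (real DIM('b) * L) * dist x y"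
    by simp
qed (use assms(2) in simp)

lemma lipschitz_extension_bounded:
  fixes F :: "'a::metric_space \<Rightarrow> 'b::euclidean_space" and L B :: real
  assumes "K \<noteq> {}" "L-lipschitz_on K F" "\<And>a. a \<in> K \<Longrightarrow> norm (F a) \<le> B"
  obtains G where "\<And>a. a \<in> K \<Longrightarrow> G a = F a" "(real DIM('b) * L)-lipschitz_on UNIV G"
    "\<And>x. norm (G x) \<le> real DIM('b) * B"
proof -
  have "\<forall>i\<in>Basis. \<exists>g. (\<forall>a\<in>K. g a = F a \<bullet> i) \<and> L-lipschitz_on UNIV g \<and> (\<forall>x. \<bar>g x\<bar> \<le> B)"
  proof
    fix i :: 'b assume i: "i \<in> Basis"
    have "\<bar>F a \<bullet> i\<bar> \<le> B" if "a \<in> K" for a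
      using Basis_le_norm[OF i, of "F a"] assms(3)[OF that] by simp
    then obtain g where "\<And>a. a \<in> K \<Longrightarrow> g a = F a \<bullet> i" "L-lipschitz_on UNIV g" "\<And>x. \<bar>g x\<bar> \<le> B"
      using lipschitz_extension_real_bounded[OF assms(1) lipschitz_on_inner_Basis[OF assms(2) i]]
      by blast
    then show "\<exists>g. (\<forall>a\<in>K. g a = F a \<bullet> i) \<and> L-lipschitz_on UNIV g \<and> (\<forall>x. \<bar>g x\<bar> \<le> B)"
      by blast
  qed
  then obtain g where "\<forall>i\<in>Basis. (\<forall>a\<in>K. g i a = F a \<bullet> i) \<and> L-lipschitz_on UNIV (g i)
      \<and> (\<forall>x. \<bar>g i x\<bar> \<le> B)"
    by (elim bchoice[THEN exE])
  then have g: "\<And>i. i \<in> Basis \<Longrightarrow> \<forall>a\<in>K. g i a = F a \<bullet> i"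
    "\<And>i. i \<in> Basis \<Longrightarrow> L-lipschitz_on UNIV (g i)" "\<And>i x. i \<in> Basis \<Longrightarrow> \<bar>g i x\<bar> \<le> B"
    by auto
  define G where "G x = (\<Sum>i\<in>Basis. g i x *\<^sub>R i)" for x
  have "G a = F a" if "a \<in> K" for a
    using g(1) that by (simp add: G_def euclidean_representation)
  moreover have "(real DIM('b) * L)-lipschitz_on UNIV G"
    unfolding G_def using g(2) lipschitz_on_nonneg[OF assms(2)] by (rule lipschitz_on_sum_Basis)
  moreover have "norm (G x) \<le> real DIM('b) * B" for x
  proof -
    have "norm (G x) \<le> (\<Sum>i\<in>(Basis::'b set). norm (g i x *\<^sub>R i))" unfolding G_def by (rule norm_sum)
    also have "\<dots> \<le> (\<Sum>i\<in>(Basis::'b set). B)" using g(3) by (intro sum_mono) simp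
    finally show ?thesis by simp
  qed
  ultimately show ?thesis using that by blast
qed

lemma at_within_Icc_eq_at_within_Ici:
  fixes t T :: real
  assumes "0 \<le> t" "t < T"
  shows "at t within {0..T} = at t within {0..}"
  by (rule at_within_nhd[of _ "{..<T}"]) (use assms in auto)

lemma has_vector_derivative_integral_Ici:
  fixes g :: "real \<Rightarrow> 'a::banach"
  assumes "continuous_on {0..} g" "t \<ge> 0"
  shows "((\<lambda>u. integral {0..u} g) has_vector_derivative g t) (at t within {0..})"
proof -
  have "((\<lambda>u. integral {0..u} g) has_vector_derivative g t) (at t within {0..t+1})"
    using integral_has_vector_derivative[OF continuous_on_subset[OF assms(1)]] assms(2) by auto
  then show ?thesis using at_within_Icc_eq_at_within_Ici[of t "t+1"] assms(2) by simp
qed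

lemma exp_weighted_integral_bound:
  fixes g :: "real \<Rightarrow> 'a::banach"
  assumes "k > 0" "u \<ge> 0" "g integrable_on {0..u}"
    and bound: "\<And>s. s \<in> {0..u} \<Longrightarrow> norm (g s) \<le> C * exp (k * s)"
  shows "norm (exp (- k * u) *\<^sub>R integral {0..u} g) \<le> C / k"
proof -
  have "norm (g 0) \<le> C" using bound[of 0] assms(2) by simp
  then have C: "C \<ge> 0" by (rule order_trans[OF norm_ge_zero])
  have "((\<lambda>s. exp (k * s) / k) has_vector_derivative exp (k * s)) (at s within {0..u})" for s
    unfolding has_real_derivative_iff_has_vector_derivative[symmetric]
    using assms(1) by (auto intro!: derivative_eq_intros)
  from fundamental_theorem_of_calculus[OF assms(2) this]
  have "((\<lambda>s. exp (k * s)) has_integral (exp (k * u) - 1) / k) {0..u}"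
    by (simp add: diff_divide_distrib)
  from has_integral_mult_right[OF this, of C]
  have int: "((\<lambda>s. C * exp (k * s)) has_integral C * ((exp (k * u) - 1) / k)) {0..u}" .
  have "norm (integral {0..u} g) \<le> integral {0..u} (\<lambda>s. C * exp (k * s))"
    by (rule integral_norm_bound_integral[OF assms(3) has_integral_integrable[OF int] bound])
  also have "\<dots> = C * ((exp (k * u) - 1) / k)" using int by (rule integral_unique)
  finally have "norm (integral {0..u} g) \<le> C * ((exp (k * u) - 1) / k)" .
  then have "exp (- k * u) * norm (integral {0..u} g) \<le> exp (- k * u) * (C * ((exp (k * u) - 1) / k))"
    by (intro mult_left_mono) auto
  also have "\<dots> = C / k * (1 - exp (- k * u))"
    using assms(1) by (simp add: exp_minus field_simps)
  also have "\<dots> \<le> C / k" using C assms(1) by (intro mult_left_le) auto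
  finally show ?thesis by simp
qed

lemma integral_equation_has_vector_derivative:
  fixes G :: "'a::banach \<Rightarrow> 'a"
  assumes "continuous_on UNIV G" "continuous_on {0..} \<phi>"
    and "\<And>t. t \<ge> 0 \<Longrightarrow> \<phi> t = x0 + integral {0..t} (\<lambda>s. G (\<phi> s))" "t \<ge> 0"
  shows "(\<phi> has_vector_derivative G (\<phi> t)) (at t within {0..})"
proof -
  have "continuous_on {0..} (\<lambda>s. G (\<phi> s))"
    using continuous_on_compose2[OF assms(1,2)] by simp
  from has_vector_derivative_integral_Ici[OF this assms(4)]
  have "((\<lambda>u. x0 + integral {0..u} (\<lambda>s. G (\<phi> s))) has_vector_derivative G (\<phi> t)) (at t within {0..})"
    by (auto intro!: derivative_eq_intros)
  then show ?thesis
    by (rule has_vector_derivative_transform[rotated 2]) (use assms(3,4) in auto)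
qed

text \<open>The Picard operator for \<open>x' = G x\<close>, \<open>x(0) = x\<^sub>0\<close>, written for \<open>\<psi>\<close> with \<open>x(t) = x\<^sub>0 + e\<^sup>k\<^sup>t \<psi>(t)\<close>
  (Bielecki's weighted norm) and extended constantly to \<open>t < 0\<close>.\<close>

definition bielecki_picard :: "real \<Rightarrow> ('a::banach \<Rightarrow> 'a) \<Rightarrow> 'a \<Rightarrow> (real \<Rightarrow> 'a) \<Rightarrow> real \<Rightarrow> 'a" where
  "bielecki_picard k G x0 \<psi> t =
     exp (- k * max 0 t) *\<^sub>R integral {0..max 0 t} (\<lambda>s. G (x0 + exp (k * s) *\<^sub>R \<psi> s))"

lemma continuous_on_integral_Ici:
  fixes g :: "real \<Rightarrow> 'a::banach"
  assumes "continuous_on {0..} g"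
  shows "continuous_on {0..} (\<lambda>u. integral {0..u} g)"
  unfolding continuous_on_eq_continuous_within
  using has_vector_derivative_integral_Ici[OF assms] by (auto intro: has_vector_derivative_continuous)

lemma bielecki_picard_bcontfun:
  fixes G :: "'a::banach \<Rightarrow> 'a"
  assumes "continuous_on UNIV G" "\<And>x. norm (G x) \<le> B" "k > 0" "continuous_on UNIV \<psi>"
  shows "bielecki_picard k G x0 \<psi> \<in> bcontfun"
proof -
  define g where "g s = G (x0 + exp (k * s) *\<^sub>R \<psi> s)" for s
  have "continuous_on UNIV g"
    unfolding g_def by (intro continuous_on_compose2[OF assms(1)] continuous_intros assms(4)) auto
  then have g: "continuous_on {0..} g" "g integrable_on {0..u}" for u
    by (auto intro: continuous_on_subset integrable_continuous_real)
  have "continuous_on UNIV (\<lambda>t. integral {0..max 0 t} g)"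
    by (rule continuous_on_compose2[OF continuous_on_integral_Ici[OF g(1)]])
      (auto intro!: continuous_intros)
  then have "continuous_on UNIV (bielecki_picard k G x0 \<psi>)"
    unfolding bielecki_picard_def g_def[symmetric] by (intro continuous_intros)
  moreover have "norm (bielecki_picard k G x0 \<psi> t) \<le> B / k" for t
    unfolding bielecki_picard_def g_def[symmetric]
  proof (rule exp_weighted_integral_bound[OF assms(3) _ g(2)])
    fix s assume "s \<in> {0..max 0 t}"
    then have "B * 1 \<le> B * exp (k * s)"
      using assms(3) order_trans[OF norm_ge_zero assms(2)] by (intro mult_left_mono) auto
    then show "norm (g s) \<le> B * exp (k * s)" using order_trans[OF assms(2)] by (simp add: g_def)
  qed simp
  ultimately show ?thesis by (rule bcontfun_normI)
qed

lemma bielecki_picard_contraction: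
  fixes G :: "'a::banach \<Rightarrow> 'a"
  assumes "L-lipschitz_on UNIV G" "k > 0" "continuous_on UNIV \<psi>1" "continuous_on UNIV \<psi>2"
    and "\<And>s. dist (\<psi>1 s) (\<psi>2 s) \<le> D"
  shows "dist (bielecki_picard k G x0 \<psi>1 t) (bielecki_picard k G x0 \<psi>2 t) \<le> L * D / k"
proof -
  define g where "g \<psi> s = G (x0 + exp (k * s) *\<^sub>R \<psi> s)" for \<psi> s
  have Gc: "continuous_on UNIV G" using lipschitz_on_continuous_on[OF assms(1)] .
  have "continuous_on UNIV (g \<psi>)" if "continuous_on UNIV \<psi>" for \<psi>
    unfolding g_def by (intro continuous_on_compose2[OF Gc] continuous_intros that) auto
  then have int: "g \<psi>1 integrable_on {0..u}" "g \<psi>2 integrable_on {0..u}" for u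
    using assms(3,4) by (auto intro: continuous_on_subset integrable_continuous_real)
  have "norm (g \<psi>1 s - g \<psi>2 s) \<le> (L * D) * exp (k * s)" for s
  proof -
    have "norm (g \<psi>1 s - g \<psi>2 s)
        \<le> L * norm ((x0 + exp (k * s) *\<^sub>R \<psi>1 s) - (x0 + exp (k * s) *\<^sub>R \<psi>2 s))"
      unfolding g_def by (rule lipschitz_on_normD[OF assms(1)]) auto
    also have "norm ((x0 + exp (k * s) *\<^sub>R \<psi>1 s) - (x0 + exp (k * s) *\<^sub>R \<psi>2 s))
        = exp (k * s) * dist (\<psi>1 s) (\<psi>2 s)"
      by (simp add: dist_norm flip: scaleR_diff_right)
    also have "L * \<dots> \<le> L * (exp (k * s) * D)"
      using lipschitz_on_nonneg[OF assms(1)] assms(5) by (intro mult_left_mono) auto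
    finally show ?thesis by (simp add: mult_ac)
  qed
  from exp_weighted_integral_bound[OF assms(2) _ integrable_diff[OF int] this]
  show ?thesis
    by (simp add: bielecki_picard_def g_def[symmetric] dist_norm integral_diff[OF int]
        flip: scaleR_diff_right)
qed

lemma lipschitz_bounded_ode_solution:
  fixes G :: "'a::banach \<Rightarrow> 'a"
  assumes lip: "L-lipschitz_on UNIV G" and bound: "\<And>x. norm (G x) \<le> B"
  obtains \<phi> where "\<phi> 0 = x0" "\<And>t. t \<ge> 0 \<Longrightarrow> (\<phi> has_vector_derivative G (\<phi> t)) (at t within {0..})"
proof -
  define k where "k = 2 * L + 1"
  have L: "L \<ge> 0" using lipschitz_on_nonneg[OF lip] .
  then have k: "k > 0" "L / k \<le> 1 / 2" by (auto simp: k_def field_simps)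
  have Gc: "continuous_on UNIV G" using lipschitz_on_continuous_on[OF lip] .
  define T where "T \<psi> = Bcontfun (bielecki_picard k G x0 (apply_bcontfun \<psi>))" for \<psi>
  have T: "apply_bcontfun (T \<psi>) = bielecki_picard k G x0 (apply_bcontfun \<psi>)" for \<psi>
    unfolding T_def using bielecki_picard_bcontfun[OF Gc bound k(1)]
    by (simp add: Bcontfun_inverse continuous_on_apply_bcontfun)
  have "dist (T \<psi>1) (T \<psi>2) \<le> 1/2 * dist \<psi>1 \<psi>2" for \<psi>1 \<psi>2
  proof (rule dist_bound)
    fix t
    have "dist (T \<psi>1 t) (T \<psi>2 t) \<le> L * dist \<psi>1 \<psi>2 / k"
      using bielecki_picard_contraction[OF lip k(1) continuous_on_apply_bcontfun continuous_on_apply_bcontfun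
          dist_bounded] by (simp add: T)
    also have "\<dots> = dist \<psi>1 \<psi>2 * (L / k)" by simp
    also have "\<dots> \<le> dist \<psi>1 \<psi>2 * (1 / 2)" using k(2) by (intro mult_left_mono) auto
    finally show "dist (T \<psi>1 t) (T \<psi>2 t) \<le> 1/2 * dist \<psi>1 \<psi>2" by simp
  qed
  then obtain \<psi> where fixp: "T \<psi> = \<psi>" using banach_fix_type[of "1/2" T] by auto
  define \<phi> where "\<phi> s = x0 + exp (k * s) *\<^sub>R \<psi> s" for s
  have \<phi>_eq: "\<phi> t = x0 + integral {0..t} (\<lambda>s. G (\<phi> s))" if "t \<ge> 0" for t
  proof -
    have "\<psi> t = exp (- k * t) *\<^sub>R integral {0..t} (\<lambda>s. G (\<phi> s))"
      using arg_cong[OF fixp, of "\<lambda>\<psi>. \<psi> t"] that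
      by (simp add: T bielecki_picard_def \<phi>_def)
    then have "\<phi> t = x0 + (exp (k * t) * exp (- k * t)) *\<^sub>R integral {0..t} (\<lambda>s. G (\<phi> s))"
      by (simp add: \<phi>_def)
    also have "exp (k * t) * exp (- k * t) = 1" by (simp flip: exp_add)
    finally show ?thesis by simp
  qed
  moreover have "continuous_on {0..} \<phi>"
    unfolding \<phi>_def by (intro continuous_intros) auto
  ultimately have "(\<phi> has_vector_derivative G (\<phi> t)) (at t within {0..})" if "t \<ge> 0" for t
    using integral_equation_has_vector_derivative[OF Gc] that by blast
  moreover have "\<phi> 0 = x0" using \<phi>_eq[of 0] by simp
  ultimately show ?thesis using that by blast
qed

lemma is_solution_shift:
  assumes "is_solution U F x0 x" "a \<ge> 0"
  shows "is_solution U F (x a) (\<lambda>s. x (a + s))"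
  unfolding is_solution_def
proof (intro conjI allI impI)
  fix t :: real assume t: "t \<ge> 0"
  then show "x (a + t) \<in> U" using assms by (simp add: is_solution_def)
  have "(x has_vector_derivative F (x (a + t))) (at (a + t) within {0..})"
    using assms t by (simp add: is_solution_def)
  then have "(x has_vector_derivative F (x (a + t))) (at ((\<lambda>s. a + s) t) within (\<lambda>s. a + s) ` {0..})"
    by (rule has_vector_derivative_within_subset) (use assms(2) in auto)
  moreover have "((\<lambda>s. a + s) has_vector_derivative 1) (at t within {0..})"
    by (auto intro!: derivative_eq_intros)
  ultimately show "((\<lambda>s. x (a + s)) has_vector_derivative F (x (a + t))) (at t within {0..})"
    using vector_diff_chain_within by (fastforce simp: o_def)
qed simp

lemma is_solution_continuous_on:
  assumes "is_solution U F x0 x"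
  shows "continuous_on {0..} x"
  unfolding continuous_on_eq_continuous_within
  using assms by (auto simp: is_solution_def intro: has_vector_derivative_continuous)

lemma is_solution_has_integral:
  assumes "is_solution U F x0 x" "t \<ge> 0"
  shows "((\<lambda>s. F (x s)) has_integral (x t - x0)) {0..t}"
proof -
  have "((\<lambda>s. F (x s)) has_integral (x t - x 0)) {0..t}"
  proof (rule fundamental_theorem_of_calculus[OF assms(2)])
    fix s assume "s \<in> {0..t}"
    then show "(x has_vector_derivative F (x s)) (at s within {0..t})"
      using assms(1) by (auto simp: is_solution_def intro: has_vector_derivative_within_subset)
  qed
  then show ?thesis using assms by (simp add: is_solution_def)
qed

lemma is_solution_diff_bound:
  assumes L: "L-lipschitz_on K F" and x1: "is_solution U F p1 x1" and x2: "is_solution U F p2 x2"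
    and t: "t \<ge> 0" and bound: "\<And>s. s \<in> {0..t} \<Longrightarrow> x1 s \<in> K \<and> x2 s \<in> K \<and> norm (x1 s - x2 s) \<le> M"
  shows "norm ((x1 t - x2 t) - (p1 - p2)) \<le> L * M * t"
proof -
  have I: "((\<lambda>s. F (x1 s) - F (x2 s)) has_integral (x1 t - p1) - (x2 t - p2)) (cbox 0 t)"
    using has_integral_diff[OF is_solution_has_integral[OF x1 t] is_solution_has_integral[OF x2 t]]
    by simp
  have F_bound: "norm (F (x1 s) - F (x2 s)) \<le> L * M" if "s \<in> cbox 0 t" for s
  proof -
    have "norm (F (x1 s) - F (x2 s)) \<le> L * norm (x1 s - x2 s)"
      using lipschitz_on_normD[OF L] bound that by simp
    also have "\<dots> \<le> L * M"
      using bound that lipschitz_on_nonneg[OF L] by (simp add: mult_left_mono)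
    finally show ?thesis .
  qed
  have "norm (x1 0 - x2 0) \<le> M" using bound[of 0] t by simp
  then have "0 \<le> M" by (rule order_trans[OF norm_ge_zero])
  then have "0 \<le> L * M" using lipschitz_on_nonneg[OF L] by simp
  from has_integral_bound[OF this I F_bound] t show ?thesis by (simp add: algebra_simps)
qed

lemma has_vector_derivative_eq_0_if_constant_on:
  fixes f :: "real \<Rightarrow> 'a::real_normed_vector"
  assumes "a < b" "s \<in> {a..b}" "(f has_vector_derivative d) (at s within {a..b})"
    and "\<And>t. t \<in> {a..b} \<Longrightarrow> f t = C"
  shows "d = 0"
proof -
  have "(f has_vector_derivative 0) (at s within {a..b})"
    by (rule has_vector_derivative_transform[OF assms(2) _ has_vector_derivative_const[of C]])
      (use assms(4) in auto)
  then show ?thesis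
    using assms(1-3) by (intro vector_derivative_unique_within_closed_interval[of a b s f]) auto
qed

lemma first_exit_time:
  fixes \<phi> :: "real \<Rightarrow> 'a::topological_space"
  assumes "continuous_on {0..} \<phi>" "open W" "\<phi> 0 \<in> W" "t \<ge> 0" "\<phi> t \<notin> W"
  obtains s where "s > 0" "\<phi> s \<notin> W" "\<And>r. 0 \<le> r \<Longrightarrow> r < s \<Longrightarrow> \<phi> r \<in> W"
proof -
  define S where "S = {0..} \<inter> \<phi> -` (- W)"
  have "closed S" unfolding S_def
    using continuous_closed_preimage[OF assms(1) closed_atLeast] assms(2) by (simp add: closed_Compl)
  moreover have S: "t \<in> S" "bdd_below S" using assms(4,5) by (auto simp: S_def bdd_below_def)
  ultimately have "Inf S \<in> S" using closed_contains_Inf by blast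
  then have exit: "Inf S \<ge> 0" "\<phi> (Inf S) \<notin> W" by (auto simp: S_def)
  have before: "\<phi> r \<in> W" if "0 \<le> r" "r < Inf S" for r
  proof (rule ccontr)
    assume "\<phi> r \<notin> W"
    then have "r \<in> S" using that by (simp add: S_def)
    then show False using cInf_lower[OF _ S(2)] that(2) by fastforce
  qed
  have "Inf S \<noteq> 0" using exit(2) assms(3) by auto
  then show ?thesis using that[OF _ exit(2) before] exit(1) by simp
qed

lemma compact_continuous_preimage_closed:
  fixes K :: "'a::metric_space set"
  assumes "compact K" "continuous_on K f" "closed C"
  shows "compact {x\<in>K. f x \<in> C}"
proof -
  have "closed (K \<inter> f -` C)"
    using continuous_closed_preimage[OF assms(2) compact_imp_closed[OF assms(1)] assms(3)] .
  moreover have "{x\<in>K. f x \<in> C} = K \<inter> (K \<inter> f -` C)" by auto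
  ultimately show ?thesis using compact_Int_closed[OF assms(1)] by metis
qed

locale gradient_like_system =
  fixes U :: "'a::euclidean_space set" and X :: "'a \<Rightarrow> 'a" and V :: "'a \<Rightarrow> real" and c :: real
  assumes open_U: "open U" and C1_X: "Ck_on 1 U X" and C2_V: "Ck_on 2 U V"
    and V_nonneg: "\<And>x. x \<in> U \<Longrightarrow> V x \<ge> 0" and zero_set_nonempty: "{x\<in>U. V x = 0} \<noteq> {}"
    and grad_V_orthogonal: "\<And>x. x \<in> U \<Longrightarrow> grad V x \<bullet> X x = 0"
    and c_pos: "c > 0" and compact_sublevel: "compact {x\<in>U. V x \<in> {0..c}}"
begin

definition F where "F x = X x - grad V x"
definition K where "K = {x\<in>U. V x \<in> {0..c}}"
definition \<Lambda> where "\<Lambda> = {x\<in>U. V x = 0}"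

lemma K_subset_U: "K \<subseteq> U"
  by (auto simp: K_def)

lemma compact_K: "compact K"
  using compact_sublevel by (simp add: K_def)

lemma V_differentiable: "x \<in> U \<Longrightarrow> V differentiable (at x)"
  using C2_V by (simp add: numeral_2_eq_2)

lemma continuous_on_V: "continuous_on U V"
  using Ck_on_continuous_on[OF open_U C2_V] .

lemma compact_\<Lambda>: "compact \<Lambda>"
proof -
  have "\<Lambda> = {x\<in>K. V x \<in> {0}}" using c_pos by (auto simp: K_def \<Lambda>_def)
  then show ?thesis
    using compact_continuous_preimage_closed[OF compact_K
        continuous_on_subset[OF continuous_on_V K_subset_U], of "{0}"]
    by simp
qed

lemma F_lipschitz_on_K:
  obtains L where "L-lipschitz_on K F"
proof -
  have "Ck_on 1 U (grad V)"
    using Ck_on_grad[OF open_U, of 1 V] C2_V by (simp add: numeral_2_eq_2)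
  then have "Ck_on 1 U (\<lambda>x. X x + (-1::real) *\<^sub>R grad V x)"
    by (intro Ck_on_add[OF open_U C1_X] Ck_on_scaleR[OF open_U Ck_on_const])
  then have "Ck_on 1 U F" by (simp add: F_def[abs_def])
  then show ?thesis using Ck_on_1_lipschitz_on_compact[OF open_U _ compact_K K_subset_U] that by blast
qed

lemma has_vector_derivative_V_along:
  assumes "y t \<in> U" "(y has_vector_derivative F (y t)) (at t within S)"
  shows "((\<lambda>s. V (y s)) has_vector_derivative - (norm (grad V (y t)))\<^sup>2) (at t within S)"
proof -
  have "X (y t) \<bullet> grad V (y t) = 0"
    using grad_V_orthogonal[OF assms(1)] by (simp add: inner_commute)
  then have "F (y t) \<bullet> grad V (y t) = - (norm (grad V (y t)))\<^sup>2"
    by (simp add: F_def inner_diff_left power2_norm_eq_inner)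
  then show ?thesis
    using has_vector_derivative_grad_comp[OF assms(2) V_differentiable[OF assms(1)]] by simp
qed

lemma V_nonincreasing_along:
  assumes "a \<le> b" "\<And>s. s \<in> {a..b} \<Longrightarrow> y s \<in> U"
    and "\<And>s. s \<in> {a..b} \<Longrightarrow> (y has_vector_derivative F (y s)) (at s within {a..b})"
  shows "V (y b) \<le> V (y a)"
proof (cases "a = b")
  case False
  then have "a < b" using assms(1) by simp
  then obtain s where "V (y b) - V (y a) = (b - a) * - (norm (grad V (y s)))\<^sup>2"
    using mvt_simple[of a b "\<lambda>s. V (y s)" "\<lambda>s h. h * - (norm (grad V (y s)))\<^sup>2"]
      has_vector_derivative_V_along[OF assms(2,3)]
    by (force simp: has_vector_derivative_def mult.commute)
  moreover have "(b - a) * (norm (grad V (y s)))\<^sup>2 \<ge> 0" using \<open>a < b\<close> by simp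
  ultimately show ?thesis by simp
qed simp

lemma solution_V_antimono:
  assumes "is_solution U F x0 x" "0 \<le> a" "a \<le> b"
  shows "V (x b) \<le> V (x a)"
proof (rule V_nonincreasing_along[OF assms(3)])
  fix s assume "s \<in> {a..b}"
  then have s: "s \<ge> 0" "{a..b} \<subseteq> {0..}" using assms(2) by auto
  then show "x s \<in> U" using assms(1) by (simp add: is_solution_def)
  show "(x has_vector_derivative F (x s)) (at s within {a..b})"
    using assms(1) s by (auto simp: is_solution_def intro: has_vector_derivative_within_subset)
qed

lemma solution_in_K:
  assumes "is_solution U F x0 x" "t \<ge> 0" "V x0 \<le> c"
  shows "x t \<in> K" "V (x t) \<le> V x0"
proof -
  have "x 0 = x0" "x t \<in> U" using assms by (auto simp: is_solution_def)
  moreover have "V (x t) \<le> V (x 0)" using solution_V_antimono[OF assms(1) _ assms(2)] by simp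
  ultimately show "V (x t) \<le> V x0" "x t \<in> K" using assms V_nonneg by (auto simp: K_def)
qed


text \<open>At its first exit time from \<open>{V < c}\<close> the curve would still lie in \<open>K\<close>, and \<open>V\<close> would
  have decreased up to then.\<close>

lemma sublevel_trapping:
  assumes \<phi>_cont: "continuous_on {0..} \<phi>" and \<phi>0: "\<phi> 0 \<in> U" "V (\<phi> 0) < c"
    and \<phi>': "\<And>t. t \<ge> 0 \<Longrightarrow> \<phi> t \<in> K \<Longrightarrow> (\<phi> has_vector_derivative F (\<phi> t)) (at t within {0..})"
    and t: "t \<ge> 0"
  shows "\<phi> t \<in> U \<and> V (\<phi> t) < c"
proof (rule ccontr)
  define W where "W = {x\<in>U. V x < c}"
  have "W = V -` {..<c} \<inter> U" by (auto simp: W_def)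
  moreover have "open (V -` {..<c} \<inter> U)"
    using continuous_on_open_vimage[OF open_U, of V] continuous_on_V by simp
  ultimately have "open W" by simp
  have WK: "W \<subseteq> K" using V_nonneg by (auto simp: W_def K_def)
  assume "\<not> (\<phi> t \<in> U \<and> V (\<phi> t) < c)"
  then obtain s where s: "s > 0" "\<phi> s \<notin> W" "\<And>r. 0 \<le> r \<Longrightarrow> r < s \<Longrightarrow> \<phi> r \<in> W"
    using first_exit_time[OF \<phi>_cont \<open>open W\<close> _ t] \<phi>0 by (auto simp: W_def)
  have "\<phi> ` closure {0..<s} \<subseteq> K"
  proof (rule image_closure_subset)
    show "continuous_on (closure {0..<s}) \<phi>" using continuous_on_subset[OF \<phi>_cont] s(1) by auto
    show "closed K" using compact_K compact_imp_closed by blast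
    show "\<phi> ` {0..<s} \<subseteq> K" using s(3) WK by auto
  qed
  then have \<phi>K: "\<phi> r \<in> K" if "r \<in> {0..s}" for r using s(1) that by auto
  have "V (\<phi> s) \<le> V (\<phi> 0)"
  proof (rule V_nonincreasing_along)
    fix r assume r: "r \<in> {0..s}"
    show "\<phi> r \<in> U" using \<phi>K[OF r] K_subset_U by blast
    show "(\<phi> has_vector_derivative F (\<phi> r)) (at r within {0..s})"
      using \<phi>'[OF _ \<phi>K[OF r]] r by (auto intro: has_vector_derivative_within_subset)
  qed (use s(1) in simp)
  then show False using s(1,2) \<phi>K[of s] K_subset_U \<phi>0 by (auto simp: W_def)
qed

lemma solution_exists:
  assumes "x0 \<in> U" "V x0 < c"
  obtains x where "is_solution U F x0 x"
proof -
  obtain L where L: "L-lipschitz_on K F" using F_lipschitz_on_K .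
  obtain M where M: "\<And>a. a \<in> K \<Longrightarrow> norm (F a) \<le> M"
    using continuous_on_compact_norm_boundE[OF compact_K lipschitz_on_continuous_on[OF L]] by blast
  have "K \<noteq> {}" using assms V_nonneg[OF assms(1)] by (auto simp: K_def)
  then obtain G where G: "\<And>a. a \<in> K \<Longrightarrow> G a = F a" "(real DIM('a) * L)-lipschitz_on UNIV G"
    "\<And>x. norm (G x) \<le> real DIM('a) * M"
    using lipschitz_extension_bounded[OF _ L M] by blast
  obtain \<phi> where \<phi>: "\<phi> 0 = x0" "\<And>t. t \<ge> 0 \<Longrightarrow> (\<phi> has_vector_derivative G (\<phi> t)) (at t within {0..})"
    using lipschitz_bounded_ode_solution[OF G(2,3)] by blast
  have cont: "continuous_on {0..} \<phi>"
    unfolding continuous_on_eq_continuous_within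
    using \<phi>(2) by (auto intro: has_vector_derivative_continuous)
  have \<phi>': "(\<phi> has_vector_derivative F (\<phi> t)) (at t within {0..})" if "t \<ge> 0" "\<phi> t \<in> K" for t
    using \<phi>(2)[OF that(1)] G(1)[OF that(2)] by simp
  have "\<phi> t \<in> K" if "t \<ge> 0" for t
    using sublevel_trapping[OF cont _ _ \<phi>' that] \<phi>(1) assms V_nonneg by (simp add: K_def)
  then have "is_solution U F x0 \<phi>"
    using \<phi>(1) \<phi>' K_subset_U by (auto simp: is_solution_def)
  then show ?thesis by (rule that)
qed

text \<open>On a window of length \<open>\<tau>\<close> with \<open>L\<tau> \<le> 1/2\<close>, where \<open>L\<close> is the Lipschitz constant of \<open>F\<close> on
  \<open>K\<close>, the integral equation gives \<open>M \<le> |p\<^sub>1 - p\<^sub>2| + M/2\<close> for the maximal distance \<open>M\<close> of the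
  two solutions.\<close>

lemma solution_lipschitz_dependence:
  obtains \<tau> where "\<tau> > 0" "\<And>p1 p2 x1 x2. is_solution U F p1 x1 \<Longrightarrow> V p1 \<le> c \<Longrightarrow>
      is_solution U F p2 x2 \<Longrightarrow> V p2 \<le> c \<Longrightarrow> norm (x1 \<tau> - x2 \<tau>) \<le> 2 * norm (p1 - p2)"
proof -
  obtain L where L: "L-lipschitz_on K F" using F_lipschitz_on_K .
  have L0: "L \<ge> 0" using lipschitz_on_nonneg[OF L] .
  define \<tau> where "\<tau> = 1 / (2 * (L + 1))"
  have \<tau>: "\<tau> > 0" "L * \<tau> \<le> 1 / 2" using L0 by (auto simp: \<tau>_def field_simps)
  have "norm (x1 \<tau> - x2 \<tau>) \<le> 2 * norm (p1 - p2)"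
    if x1: "is_solution U F p1 x1" "V p1 \<le> c" and x2: "is_solution U F p2 x2" "V p2 \<le> c"
    for p1 p2 x1 x2
  proof -
    have "continuous_on {0..\<tau>} (\<lambda>s. norm (x1 s - x2 s))"
      by (intro continuous_intros continuous_on_subset[OF is_solution_continuous_on[OF x1(1)]]
          continuous_on_subset[OF is_solution_continuous_on[OF x2(1)]]) auto
    moreover have "{0..\<tau>} \<noteq> {}" using \<tau>(1) by simp
    ultimately obtain m where m: "m \<in> {0..\<tau>}"
      "\<And>s. s \<in> {0..\<tau>} \<Longrightarrow> norm (x1 s - x2 s) \<le> norm (x1 m - x2 m)"
      using continuous_attains_sup[OF compact_Icc] by blast
    define M where "M = norm (x1 m - x2 m)"
    have "norm ((x1 m - x2 m) - (p1 - p2)) \<le> L * M * m"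
      using m solution_in_K(1)[OF x1(1) _ x1(2)] solution_in_K(1)[OF x2(1) _ x2(2)]
      by (intro is_solution_diff_bound[OF L x1(1) x2(1)]) (auto simp: M_def)
    also have "\<dots> \<le> M * (L * \<tau>)"
      using m L0 by (simp add: M_def mult_left_mono mult.assoc mult.left_commute)
    also have "\<dots> \<le> M / 2" using mult_left_mono[OF \<tau>(2), of M] by (simp add: M_def)
    finally have "M \<le> 2 * norm (p1 - p2)"
      using norm_triangle_sub[of "x1 m - x2 m" "p1 - p2"] by (simp add: M_def)
    then show ?thesis using m(2)[of \<tau>] \<tau>(1) by (simp add: M_def)
  qed
  then show ?thesis using that \<tau>(1) by blast
qed

lemma grad_V_vanishes_if_V_constant:
  assumes "is_solution U F p y" "\<tau> > 0" "V (y \<tau>) = V p" "s \<in> {0..\<tau>}"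
  shows "grad V (y s) = 0"
proof -
  have y0: "y 0 = p" using assms(1) by (simp add: is_solution_def)
  have V_const: "V (y r) = V p" if "r \<in> {0..\<tau>}" for r
    using solution_V_antimono[OF assms(1), of 0 r] solution_V_antimono[OF assms(1), of r \<tau>] that assms(3) y0
    by simp
  have "y s \<in> U" "(y has_vector_derivative F (y s)) (at s within {0..})"
    using assms(1,4) by (auto simp: is_solution_def)
  from has_vector_derivative_V_along[OF this]
  have "((\<lambda>r. V (y r)) has_vector_derivative - (norm (grad V (y s)))\<^sup>2) (at s within {0..\<tau>})"
    by (rule has_vector_derivative_within_subset) auto
  then have "- (norm (grad V (y s)))\<^sup>2 = 0"
    using has_vector_derivative_eq_0_if_constant_on[OF assms(2,4)] V_const by blast
  then show ?thesis by simp
qed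


lemma nbhd_subset_sublevel:
  assumes "\<eta> > 0"
  obtains \<delta> where "\<delta> > 0" "nbhd \<Lambda> \<delta> \<subseteq> {x\<in>U. V x < \<eta>}"
proof -
  have "open (V -` {..<\<eta>} \<inter> U)"
    using continuous_on_open_vimage[OF open_U, of V] continuous_on_V by simp
  moreover have "\<Lambda> \<subseteq> V -` {..<\<eta>} \<inter> U" using assms by (auto simp: \<Lambda>_def)
  ultimately obtain e where e: "e > 0" "(\<Union>a\<in>\<Lambda>. ball a e) \<subseteq> V -` {..<\<eta>} \<inter> U"
    using compact_subset_open_imp_ball_epsilon_subset[OF compact_\<Lambda>] by blast
  have "x \<in> U \<and> V x < \<eta>" if "infdist x \<Lambda> < e" for x
  proof -
    have "\<Lambda> \<noteq> {}" using zero_set_nonempty by (simp add: \<Lambda>_def)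
    then obtain a where "a \<in> \<Lambda>" "infdist x \<Lambda> = dist x a"
      using infdist_attains_inf[OF compact_imp_closed[OF compact_\<Lambda>]] by blast
    then show ?thesis using that e(2) by (fastforce simp: dist_commute)
  qed
  then show ?thesis using that[OF e(1)] by (auto simp: nbhd_def)
qed

lemma sublevel_subset_nbhd:
  assumes "\<epsilon> > 0"
  obtains \<eta> where "\<eta> > 0" "{x\<in>K. V x < \<eta>} \<subseteq> nbhd \<Lambda> \<epsilon>"
proof -
  define S where "S = K \<inter> {x. \<epsilon> \<le> infdist x \<Lambda>}"
  have "compact S" unfolding S_def
    by (rule compact_Int_closed[OF compact_K]) (intro closed_Collect_le continuous_intros)
  show ?thesis
  proof (cases "S = {}")
    case True
    then have "{x\<in>K. V x < 1} \<subseteq> nbhd \<Lambda> \<epsilon>" by (auto simp: S_def nbhd_def not_le)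
    then show ?thesis by (rule that[rotated]) simp
  next
    case False
    then obtain q where q: "q \<in> S" "\<And>z. z \<in> S \<Longrightarrow> V q \<le> V z"
      using continuous_attains_inf[OF \<open>compact S\<close> _ continuous_on_subset[OF continuous_on_V]] K_subset_U
      by (auto simp: S_def)
    have "q \<notin> \<Lambda>" using q(1) assms by (auto simp: S_def)
    then have "V q > 0" using q(1) V_nonneg K_subset_U by (force simp: S_def \<Lambda>_def)
    moreover have "{x\<in>K. V x < V q} \<subseteq> nbhd \<Lambda> \<epsilon>"
      using q(2) by (force simp: S_def nbhd_def)
    ultimately show ?thesis by (rule that)
  qed
qed

lemma pos_invariant_zero_set: "pos_invariant U F \<Lambda>"
  unfolding pos_invariant_def
proof (intro ballI conjI allI impI)
  fix x0 assume "x0 \<in> \<Lambda>"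
  then have x0: "x0 \<in> U" "V x0 = 0" by (auto simp: \<Lambda>_def)
  then show "\<exists>x. is_solution U F x0 x" using solution_exists c_pos by (metis)
  fix x t assume "is_solution U F x0 x" "(0::real) \<le> t"
  from solution_in_K[OF this] x0 c_pos show "x t \<in> \<Lambda>"
    using V_nonneg by (force simp: K_def \<Lambda>_def)
qed

lemma unif_stable_zero_set: "unif_stable U F \<Lambda>"
  unfolding unif_stable_def
proof (intro allI impI)
  fix \<epsilon> :: real assume "\<epsilon> > 0"
  obtain \<eta> where \<eta>: "\<eta> > 0" "{x\<in>K. V x < \<eta>} \<subseteq> nbhd \<Lambda> \<epsilon>"
    using sublevel_subset_nbhd[OF \<open>\<epsilon> > 0\<close>] by blast
  obtain \<delta> where \<delta>: "\<delta> > 0" "nbhd \<Lambda> \<delta> \<subseteq> {x\<in>U. V x < min \<eta> c}"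
    using nbhd_subset_sublevel[of "min \<eta> c"] \<eta>(1) c_pos by auto
  have "(\<exists>x. is_solution U F x0 x) \<and> (\<forall>x. is_solution U F x0 x \<longrightarrow> (\<forall>t\<ge>0. x t \<in> nbhd \<Lambda> \<epsilon>))"
    if "x0 \<in> nbhd \<Lambda> \<delta>" for x0
  proof (intro conjI allI impI)
    have x0: "x0 \<in> U" "V x0 < \<eta>" "V x0 < c" using that \<delta>(2) by auto
    then show "\<exists>x. is_solution U F x0 x" using solution_exists by metis
    fix x t assume "is_solution U F x0 x" "(0::real) \<le> t"
    from solution_in_K[OF this] x0 have "x t \<in> K" "V (x t) < \<eta>" by auto
    then show "x t \<in> nbhd \<Lambda> \<epsilon>" using \<eta>(2) by blast
  qed
  then show "\<exists>\<delta>>0. \<forall>x0\<in>nbhd \<Lambda> \<delta>. (\<exists>x. is_solution U F x0 x) \<and>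
      (\<forall>x. is_solution U F x0 x \<longrightarrow> (\<forall>t\<ge>0. x t \<in> nbhd \<Lambda> \<epsilon>))"
    using \<delta>(1) by blast
qed

end

text \<open>The only consequence of A3 and A3' that the attraction argument uses: \<open>\<nabla>V\<close> cannot vanish
  along a solution arc starting in \<open>K\<close> outside \<open>V\<^sup>-\<^sup>1(0)\<close>.\<close>

locale lasalle_gradient_system = gradient_like_system +
  assumes no_critical_arc: "\<And>p y \<tau>. p \<in> U \<Longrightarrow> V p \<le> c \<Longrightarrow> \<tau> > 0 \<Longrightarrow>
      is_solution U (\<lambda>x. X x - grad V x) p y \<Longrightarrow> \<forall>s\<in>{0..\<tau>}. grad V (y s) = 0 \<Longrightarrow> V p = 0"
begin

lemma V_strictly_decreases:
  assumes "p \<in> U" "V p \<le> c" "V p \<noteq> 0" "\<tau> > 0" "is_solution U F p x"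
  shows "V (x \<tau>) < V p"
proof -
  have "V (x \<tau>) \<le> V p"
    using solution_V_antimono[OF assms(5), of 0 \<tau>] assms(4,5) by (simp add: is_solution_def)
  moreover have "V (x \<tau>) \<noteq> V p"
  proof
    assume "V (x \<tau>) = V p"
    then have "\<forall>s\<in>{0..\<tau>}. grad V (x s) = 0"
      using grad_V_vanishes_if_V_constant[OF assms(5,4)] by blast
    then show False
      using no_critical_arc[OF assms(1,2,4)] assms(3,5) by (simp add: F_def[abs_def])
  qed
  ultimately show ?thesis by simp
qed

text \<open>The drop \<open>V p - V (x(\<tau>))\<close> is a function of \<open>p\<close>, continuous by Lipschitz dependence on the
  initial point and positive on the compact set \<open>{\<eta> \<le> V \<le> c/2}\<close>.\<close>

lemma uniform_decrease:
  assumes "\<eta> > 0"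
  obtains \<tau> m where "\<tau> > 0" "m > 0"
    "\<And>p x. p \<in> U \<Longrightarrow> \<eta> \<le> V p \<Longrightarrow> V p \<le> c/2 \<Longrightarrow> is_solution U F p x \<Longrightarrow> V (x \<tau>) \<le> V p - m"
proof -
  obtain \<tau> where \<tau>: "\<tau> > 0" and dep: "\<And>p1 p2 x1 x2. is_solution U F p1 x1 \<Longrightarrow> V p1 \<le> c \<Longrightarrow>
      is_solution U F p2 x2 \<Longrightarrow> V p2 \<le> c \<Longrightarrow> norm (x1 \<tau> - x2 \<tau>) \<le> 2 * norm (p1 - p2)"
    using solution_lipschitz_dependence by blast
  define S where "S = {p\<in>K. V p \<in> {\<eta>..c/2}}"
  have "compact S"
    unfolding S_def
    by (rule compact_continuous_preimage_closed[OF compact_K continuous_on_subset[OF continuous_on_V K_subset_U]])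
      simp
  have S: "p \<in> U" "V p \<le> c" "V p < c" "V p \<noteq> 0" if "p \<in> S" for p
    using that c_pos assms by (auto simp: S_def K_def)
  define sol where "sol p = (SOME x. is_solution U F p x)" for p
  have sol: "is_solution U F p (sol p)" if "p \<in> S" for p
    unfolding sol_def using solution_exists[OF S(1,3)[OF that]] by (metis someI)
  have "2-lipschitz_on S (\<lambda>p. sol p \<tau>)"
  proof (rule lipschitz_onI)
    fix p1 p2 assume "p1 \<in> S" "p2 \<in> S"
    then show "dist (sol p1 \<tau>) (sol p2 \<tau>) \<le> 2 * dist p1 p2"
      using dep[OF sol S(2) sol S(2)] by (simp add: dist_norm)
  qed simp
  then have "continuous_on S (\<lambda>p. V (sol p \<tau>))"
    using solution_in_K(1)[OF sol _ S(2)] \<tau> K_subset_U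
    by (intro continuous_on_compose2[OF continuous_on_V lipschitz_on_continuous_on]) auto
  then have cont: "continuous_on S (\<lambda>p. V p - V (sol p \<tau>))"
    using S(1) by (intro continuous_intros continuous_on_subset[OF continuous_on_V]) auto
  obtain m where m: "m > 0" "\<And>p. p \<in> S \<Longrightarrow> m \<le> V p - V (sol p \<tau>)"
  proof (cases "S = {}")
    case False
    then obtain q where q: "q \<in> S" "\<And>p. p \<in> S \<Longrightarrow> V q - V (sol q \<tau>) \<le> V p - V (sol p \<tau>)"
      using continuous_attains_inf[OF \<open>compact S\<close> _ cont] by blast
    show ?thesis
    proof (rule that[OF _ q(2)])
      show "0 < V q - V (sol q \<tau>)"
        using V_strictly_decreases[OF S(1,2,4)[OF q(1)] \<tau> sol[OF q(1)]] by simp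
    qed
  qed (use that[of 1] in simp)
  have "V (x \<tau>) \<le> V p - m" if "p \<in> U" "\<eta> \<le> V p" "V p \<le> c/2" "is_solution U F p x" for p x
  proof -
    have "p \<in> S" using that assms by (auto simp: S_def K_def)
    then have "x \<tau> = sol p \<tau>"
      using dep[OF that(4) S(2)[OF \<open>p \<in> S\<close>] sol[OF \<open>p \<in> S\<close>] S(2)[OF \<open>p \<in> S\<close>]] by simp
    then show ?thesis using m(2)[OF \<open>p \<in> S\<close>] by simp
  qed
  then show ?thesis using that \<tau> m(1) by blast
qed

lemma iterated_decrease:
  assumes decrease: "\<And>p x. p \<in> U \<Longrightarrow> \<eta> \<le> V p \<Longrightarrow> V p \<le> c/2 \<Longrightarrow> is_solution U F p x \<Longrightarrow>
      V (x \<tau>) \<le> V p - m"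
    and "\<tau> > 0" "y0 \<in> U" "V y0 \<le> c/2" and y: "is_solution U F y0 y"
    and above: "\<And>j. j < n \<Longrightarrow> \<eta> \<le> V (y (real j * \<tau>))"
  shows "V (y (real n * \<tau>)) \<le> V y0 - real n * m"
  using above
proof (induction n)
  case 0
  then show ?case using y by (simp add: is_solution_def)
next
  case (Suc n)
  define p where "p = y (real n * \<tau>)"
  have p: "p \<in> U" "V p \<le> c/2"
    using solution_in_K[OF y, of "real n * \<tau>"] assms(2-4) c_pos by (auto simp: p_def K_def)
  have "is_solution U F p (\<lambda>s. y (real n * \<tau> + s))"
    unfolding p_def using is_solution_shift[OF y] assms(2) by simp
  from decrease[OF p(1) _ p(2) this] Suc.prems[of n]
  have "V (y (real n * \<tau> + \<tau>)) \<le> V p - m" by (simp add: p_def)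
  then show ?case using Suc by (simp add: p_def algebra_simps)
qed

text \<open>\<open>V\<close> drops by \<open>m\<close> per window while it is at least \<open>\<eta>\<close>, and it starts below \<open>c/2\<close>.\<close>

lemma uniform_attraction:
  assumes "\<eta> > 0"
  obtains T where "T > 0"
    "\<And>x0 x t. x0 \<in> U \<Longrightarrow> V x0 \<le> c/2 \<Longrightarrow> is_solution U F x0 x \<Longrightarrow> T \<le> t \<Longrightarrow> V (x t) < \<eta>"
proof -
  obtain \<tau> m where \<tau>: "\<tau> > 0" and m: "m > 0"
    and decrease: "\<And>p x. p \<in> U \<Longrightarrow> \<eta> \<le> V p \<Longrightarrow> V p \<le> c/2 \<Longrightarrow> is_solution U F p x \<Longrightarrow>
      V (x \<tau>) \<le> V p - m"
    using uniform_decrease[OF assms] by blast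
  obtain n :: nat where n: "c/2 < real n * m" using reals_Archimedean3[OF m] by blast
  have "V (x t) < \<eta>"
    if x0: "x0 \<in> U" "V x0 \<le> c/2" and x: "is_solution U F x0 x" and t: "real n * \<tau> \<le> t" for x0 x t
  proof (rule ccontr)
    assume "\<not> V (x t) < \<eta>"
    have above: "\<eta> \<le> V (x (real j * \<tau>))" if "j \<le> n" for j
    proof -
      have "real j * \<tau> \<le> real n * \<tau>" using that \<tau> by (intro mult_right_mono) auto
      then have "real j * \<tau> \<le> t" using t by linarith
      then have "V (x t) \<le> V (x (real j * \<tau>))"
        using solution_V_antimono[OF x, of "real j * \<tau>" t] \<tau> by simp
      then show ?thesis using \<open>\<not> V (x t) < \<eta>\<close> by simp
    qed
    have "V (x (real n * \<tau>)) \<le> V x0 - real n * m"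
    proof (rule iterated_decrease[OF _ \<tau> x0 x])
      fix p y assume "p \<in> U" "\<eta> \<le> V p" "V p \<le> c/2" "is_solution U F p y"
      then show "V (y \<tau>) \<le> V p - m" by (rule decrease)
    next
      show "\<eta> \<le> V (x (real j * \<tau>))" if "j < n" for j using above that by simp
    qed
    then show False using above[of n] n x0(2) assms by simp
  qed
  moreover have "real n * \<tau> > 0"
  proof -
    have "0 < real n * m" using n c_pos by linarith
    then show ?thesis using m \<tau> by (simp add: zero_less_mult_iff)
  qed
  ultimately show ?thesis using that by blast
qed

theorem unif_asym_stable_zero_set: "unif_asym_stable U F \<Lambda>"
proof -
  have "c/2 > 0" using c_pos by simp
  then obtain \<delta>0 where \<delta>0: "\<delta>0 > 0" "nbhd \<Lambda> \<delta>0 \<subseteq> {x\<in>U. V x < c/2}"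
    by (rule nbhd_subset_sublevel)
  have "\<exists>x. is_solution U F x0 x" if "x0 \<in> nbhd \<Lambda> \<delta>0" for x0
  proof -
    have "x0 \<in> U" "V x0 < c" using that \<delta>0(2) c_pos by auto
    then show ?thesis using solution_exists by metis
  qed
  moreover have "\<exists>T>0. \<forall>x0\<in>nbhd \<Lambda> \<delta>0. \<forall>x. is_solution U F x0 x \<longrightarrow> (\<forall>t\<ge>T. x t \<in> nbhd \<Lambda> \<epsilon>)"
    if \<epsilon>: "\<epsilon> > 0" for \<epsilon>
  proof -
    obtain \<eta> where \<eta>: "\<eta> > 0" "{x\<in>K. V x < \<eta>} \<subseteq> nbhd \<Lambda> \<epsilon>"
      using sublevel_subset_nbhd[OF \<epsilon>] by blast
    obtain T where T: "T > 0"
      "\<And>x0 x t. x0 \<in> U \<Longrightarrow> V x0 \<le> c/2 \<Longrightarrow> is_solution U F x0 x \<Longrightarrow> T \<le> t \<Longrightarrow> V (x t) < \<eta>"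
      using uniform_attraction[OF \<eta>(1)] by blast
    have "x t \<in> nbhd \<Lambda> \<epsilon>" if "x0 \<in> nbhd \<Lambda> \<delta>0" "is_solution U F x0 x" "T \<le> t" for x0 x t
    proof -
      have "x0 \<in> U" "V x0 \<le> c/2" using that(1) \<delta>0(2) by auto
      then have "V (x t) < \<eta>" using T(2) that(2,3) by blast
      moreover have "x t \<in> K"
        using solution_in_K(1)[OF that(2), of t] T(1) that(3) \<open>V x0 \<le> c/2\<close> c_pos by simp
      ultimately show ?thesis using \<eta>(2) by blast
    qed
    then show ?thesis using T(1) by blast
  qed
  ultimately show ?thesis
    unfolding unif_asym_stable_def using pos_invariant_zero_set unif_stable_zero_set \<delta>0(1) by blast
qed

end

lemma lie_iter_vanishes_along_trajectory:
  assumes "open U" "smooth_on U X" "smooth_on U g" "\<tau> > 0"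
    and "\<And>s. s \<in> {0..\<tau>} \<Longrightarrow> y s \<in> U"
    and "\<And>s. s \<in> {0..\<tau>} \<Longrightarrow> (y has_vector_derivative X (y s)) (at s within {0..\<tau>})"
    and "\<And>s. s \<in> {0..\<tau>} \<Longrightarrow> g (y s) = 0"
  shows "s \<in> {0..\<tau>} \<Longrightarrow> lie_iter X k g (y s) = 0"
proof (induction k arbitrary: s)
  case 0
  then show ?case using assms(7) by simp
next
  case (Suc k)
  define h where "h = lie_iter X k g"
  have "Ck_on (Suc 0) U h"
    using smooth_on_lie_iter[OF assms(1-3)] by (simp add: h_def smooth_on_def)
  then have "h differentiable (at (y s))" using assms(5)[OF Suc.prems] by simp
  from has_vector_derivative_grad_comp[OF assms(6)[OF Suc.prems] this]
  have "X (y s) \<bullet> grad h (y s) = 0"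
    by (rule has_vector_derivative_eq_0_if_constant_on[OF assms(4) Suc.prems])
      (use Suc.IH in \<open>simp add: h_def\<close>)
  then show ?case by (simp add: h_def)
qed

text \<open>Where \<open>\<nabla>V\<close> vanishes along an arc, the arc is an orbit of \<open>X\<close> along which all
  \<open>\<partial>V/\<partial>x\<^sub>i\<close> vanish, hence so do all their iterated Lie derivatives.\<close>

lemma lie_condition_excludes_critical_arcs:
  fixes U :: "'a::euclidean_space set"
  assumes "open U" "smooth_on U X" "smooth_on U V"
    and S: "{x\<in>U. \<forall>k. \<forall>i\<in>Basis. lie_iter X k (\<lambda>y. pderiv_at V i y) x = 0} \<inter> {x\<in>U. V x \<in> {0..c}}
      \<subseteq> {x\<in>U. V x = 0}"
    and "p \<in> U" "V p \<in> {0..c}" "\<tau> > 0" "is_solution U (\<lambda>x. X x - grad V x) p y"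
    and critical: "\<forall>s\<in>{0..\<tau>}. grad V (y s) = 0"
  shows "V p = 0"
proof -
  have yU: "y s \<in> U" if "s \<in> {0..\<tau>}" for s
    using assms(8) that by (simp add: is_solution_def)
  have y': "(y has_vector_derivative X (y s)) (at s within {0..\<tau>})" if "s \<in> {0..\<tau>}" for s
  proof -
    have "(y has_vector_derivative X (y s) - grad V (y s)) (at s within {0..})"
      using assms(8) that by (simp add: is_solution_def)
    moreover have "grad V (y s) = 0" using critical that by blast
    ultimately show ?thesis by (auto elim: has_vector_derivative_within_subset)
  qed
  have "lie_iter X k (\<lambda>y. pderiv_at V i y) (y 0) = 0" if "i \<in> Basis" for k i
  proof (rule lie_iter_vanishes_along_trajectory[OF assms(1,2) _ assms(7) yU y'])
    have "Ck_on k U (\<lambda>y. pderiv_at V i y)" for k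
      using assms(3) that Ck_on.simps(2)[of k U V] by (simp add: smooth_on_def)
    then show "smooth_on U (\<lambda>y. pderiv_at V i y)" by (simp add: smooth_on_def)
    show "pderiv_at V i (y s) = 0" if "s \<in> {0..\<tau>}" for s
      using critical that grad_inner_Basis[OF \<open>i \<in> Basis\<close>, of V "y s"] by simp
  qed (use assms(7) in auto)
  moreover have "y 0 = p" using assms(8) by (simp add: is_solution_def)
  ultimately show ?thesis using S assms(5,6) by blast
qed

theorem lemma8:
  fixes U :: "'a::euclidean_space set" and X :: "'a \<Rightarrow> 'a" and V :: "'a \<Rightarrow> real" and c :: real
  assumes "open U"
    and "Ck_on 1 U X"
    and "Ck_on 2 U V"
    and A1: "\<forall>x\<in>U. V x \<ge> 0" "{x\<in>U. V x = 0} \<noteq> {}" "\<forall>x\<in>U. grad V x \<bullet> X x = 0"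
    and A2: "c > 0" "compact {x\<in>U. V x \<in> {0..c}}"
    and A3_or_A3': "{x\<in>U. V x \<in> {0..c} \<and> grad V x = 0} = {x\<in>U. V x = 0}
       \<or> (smooth_on U X \<and> smooth_on U V \<and>
          {x\<in>U. \<forall>k. \<forall>i\<in>Basis. lie_iter X k (\<lambda>y. pderiv_at V i y) x = 0} \<inter> {x\<in>U. V x \<in> {0..c}}
            \<subseteq> {x\<in>U. V x = 0})"
  shows "unif_asym_stable U (\<lambda>x. X x - grad V x) {x\<in>U. V x = 0}"
proof -
  interpret gradient_like_system U X V c
    using assms by unfold_locales auto
  have "V p = 0" if p: "p \<in> U" "V p \<le> c" "\<tau> > 0" "is_solution U (\<lambda>x. X x - grad V x) p y"
    and critical: "\<forall>s\<in>{0..\<tau>}. grad V (y s) = 0" for p y \<tau>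
  proof -
    have "V p \<in> {0..c}" using p A1(1) by auto
    moreover have "grad V p = 0" using critical p(3,4) by (force simp: is_solution_def)
    ultimately show ?thesis
      using A3_or_A3' lie_condition_excludes_critical_arcs[OF assms(1) _ _ _ p(1) _ p(3,4) critical]
        p(1) by blast
  qed
  then interpret lasalle_gradient_system U X V c
    by unfold_locales
  show ?thesis using unif_asym_stable_zero_set by (simp add: F_def[abs_def] \<Lambda>_def)
qed

end
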